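(* Let $\mathbf{C}$ be a locally small category all of whose morphisms are monomorphisms, and let $\mathfrak{G} = (G_A)_{A \in \mathrm{Ob}(\mathbf{C})}$ be a family of groups with $G_A \le \mathrm{Aut}_\mathbf{C}(A)$ for all $A \in \mathrm{Ob}(\mathbf{C})$. If $\mathbf{C}$ has the $\mathfrak{G}$-Ramsey property, i.e. $t^\mathfrak{G}_\mathbf{C}(A) = 1$ for all $A \in \mathrm{Ob}(\mathbf{C})$, then $\mathrm{Aut}_\mathbf{C}(A) = G_A$ for all $A \in \mathrm{Ob}(\mathbf{C})$. In particular, if $\mathbf{C}$ has the embedding Ramsey property (the case $G_A = \{\mathrm{id}_A\}$ for all $A$), then every object of $\mathbf{C}$ is rigid, i.e. $\mathrm{Aut}_\mathbf{C}(A) = \{\mathrm{id}_A\}$.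
   Context: $\mathrm{Aut}_\mathbf{C}(A)$ is the group of invertible morphisms $A \to A$. For $f, g \in \hom(A,B)$ write $f \sim_\mathfrak{G} g$ if $f = g \cdot \alpha$ for some $\alpha \in G_A$; let $\binom{B}{A}_\mathfrak{G} = \hom(A,B)/{\sim_\mathfrak{G}} = \{f \cdot G_A : f \in \hom(A,B)\}$. For $w \in \hom(B,C)$ and a set $X$ of classes in $\binom{B}{A}_\mathfrak{G}$, $w \cdot X = \{(w\cdot f)/{\sim_\mathfrak{G}} : f/{\sim_\mathfrak{G}} \in X\}$. For $k,t \in \mathbb{N}$ and objects $A \to B \to C$ (meaning the homsets are nonempty), $C \overset{\mathfrak{G}}{\longrightarrow} (B)^A_{k,t}$ means: for every coloring $\chi : \binom{C}{A}_\mathfrak{G} \to k = \{0,\dots,k-1\}$ there is $w \in \hom(B,C)$ with $|\chi(w \cdot \binom{B}{A}_\mathfrak{G})| \le t$. The small $\mathfrak{G}$-Ramsey degree $t^\mathfrak{G}_\mathbf{C}(A)$ is the least positive integer $n$ such that for all $k \in \mathbb{N}$ and all $B \in \mathrm{Ob}(\mathbf{C})$ there is $C \in \mathrm{Ob}(\mathbf{C})$ with $C \overset{\mathfrak{G}}{\longrightarrow} (B)^A_{k,n}$; if no such $n$ exists, $t^\mathfrak{G}_\mathbf{C}(A) = \infty$. *)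

theory Defs
  imports Main
begin

text \<open>A (locally small) category with objects Ob, hom-sets hom A B, composition
  cmp g f (= g \<cdot> f, first f then g) and identities ident A.\<close>

definition category ::
  "'o set \<Rightarrow> ('o \<Rightarrow> 'o \<Rightarrow> 'm set) \<Rightarrow> ('m \<Rightarrow> 'm \<Rightarrow> 'm) \<Rightarrow> ('o \<Rightarrow> 'm) \<Rightarrow> bool" where
  "category Ob hom cmp ident \<longleftrightarrow>
     (\<forall>A\<in>Ob. ident A \<in> hom A A) \<and>
     (\<forall>A\<in>Ob. \<forall>B\<in>Ob. \<forall>C\<in>Ob. \<forall>f\<in>hom A B. \<forall>g\<in>hom B C. cmp g f \<in> hom A C) \<and>
     (\<forall>A\<in>Ob. \<forall>B\<in>Ob. \<forall>C\<in>Ob. \<forall>D\<in>Ob. \<forall>f\<in>hom A B. \<forall>g\<in>hom B C. \<forall>h\<in>hom C D.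
        cmp h (cmp g f) = cmp (cmp h g) f) \<and>
     (\<forall>A\<in>Ob. \<forall>B\<in>Ob. \<forall>f\<in>hom A B. cmp f (ident A) = f \<and> cmp (ident B) f = f)"

definition all_mono ::
  "'o set \<Rightarrow> ('o \<Rightarrow> 'o \<Rightarrow> 'm set) \<Rightarrow> ('m \<Rightarrow> 'm \<Rightarrow> 'm) \<Rightarrow> bool" where
  "all_mono Ob hom cmp \<longleftrightarrow>
     (\<forall>X\<in>Ob. \<forall>A\<in>Ob. \<forall>B\<in>Ob. \<forall>f\<in>hom A B. \<forall>g\<in>hom X A. \<forall>h\<in>hom X A.
        cmp f g = cmp f h \<longrightarrow> g = h)"

definition Aut ::
  "('o \<Rightarrow> 'o \<Rightarrow> 'm set) \<Rightarrow> ('m \<Rightarrow> 'm \<Rightarrow> 'm) \<Rightarrow> ('o \<Rightarrow> 'm) \<Rightarrow> 'o \<Rightarrow> 'm set" where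
  "Aut hom cmp ident A =
     {f \<in> hom A A. \<exists>g\<in>hom A A. cmp g f = ident A \<and> cmp f g = ident A}"

definition subgroup_Aut ::
  "('o \<Rightarrow> 'o \<Rightarrow> 'm set) \<Rightarrow> ('m \<Rightarrow> 'm \<Rightarrow> 'm) \<Rightarrow> ('o \<Rightarrow> 'm) \<Rightarrow> 'o \<Rightarrow> 'm set \<Rightarrow> bool" where
  "subgroup_Aut hom cmp ident A H \<longleftrightarrow>
     H \<subseteq> Aut hom cmp ident A \<and> ident A \<in> H \<and>
     (\<forall>a\<in>H. \<forall>b\<in>H. cmp a b \<in> H) \<and>
     (\<forall>a\<in>H. \<exists>b\<in>H. cmp b a = ident A \<and> cmp a b = ident A)"

definition gclass :: "('m \<Rightarrow> 'm \<Rightarrow> 'm) \<Rightarrow> ('o \<Rightarrow> 'm set) \<Rightarrow> 'o \<Rightarrow> 'm \<Rightarrow> 'm set" where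
  "gclass cmp G A f = {cmp f \<alpha> | \<alpha>. \<alpha> \<in> G A}"

definition gbinom ::
  "('o \<Rightarrow> 'o \<Rightarrow> 'm set) \<Rightarrow> ('m \<Rightarrow> 'm \<Rightarrow> 'm) \<Rightarrow> ('o \<Rightarrow> 'm set) \<Rightarrow> 'o \<Rightarrow> 'o \<Rightarrow> 'm set set" where
  "gbinom hom cmp G B A = gclass cmp G A ` hom A B"

definition gact ::
  "('o \<Rightarrow> 'o \<Rightarrow> 'm set) \<Rightarrow> ('m \<Rightarrow> 'm \<Rightarrow> 'm) \<Rightarrow> ('o \<Rightarrow> 'm set) \<Rightarrow> 'o \<Rightarrow> 'o \<Rightarrow> 'm \<Rightarrow> 'm set set \<Rightarrow> 'm set set" where
  "gact hom cmp G A B w X =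
     {gclass cmp G A (cmp w f) | f. f \<in> hom A B \<and> gclass cmp G A f \<in> X}"

definition gramsey_arrow ::
  "('o \<Rightarrow> 'o \<Rightarrow> 'm set) \<Rightarrow> ('m \<Rightarrow> 'm \<Rightarrow> 'm) \<Rightarrow> ('o \<Rightarrow> 'm set) \<Rightarrow> 'o \<Rightarrow> 'o \<Rightarrow> 'o \<Rightarrow> nat \<Rightarrow> nat \<Rightarrow> bool" where
  "gramsey_arrow hom cmp G C B A k t \<longleftrightarrow>
     hom A B \<noteq> {} \<and> hom B C \<noteq> {} \<and>
     (\<forall>\<chi> :: 'm set \<Rightarrow> nat. \<chi> ` gbinom hom cmp G C A \<subseteq> {..<k} \<longrightarrow>
        (\<exists>w\<in>hom B C. card (\<chi> ` gact hom cmp G A B w (gbinom hom cmp G B A)) \<le> t))"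

definition gramsey_degree_le ::
  "'o set \<Rightarrow> ('o \<Rightarrow> 'o \<Rightarrow> 'm set) \<Rightarrow> ('m \<Rightarrow> 'm \<Rightarrow> 'm) \<Rightarrow> ('o \<Rightarrow> 'm set) \<Rightarrow> 'o \<Rightarrow> nat \<Rightarrow> bool" where
  "gramsey_degree_le Ob hom cmp G A n \<longleftrightarrow>
     (\<forall>k::nat. \<forall>B\<in>Ob. hom A B \<noteq> {} \<longrightarrow>
        (\<exists>C\<in>Ob. gramsey_arrow hom cmp G C B A k n))"

text \<open>Small G-Ramsey degree t^G_C(A) as an extended natural: least positive n, else \<infinity>
  (represented as None).\<close>
definition gramsey_degree ::
  "'o set \<Rightarrow> ('o \<Rightarrow> 'o \<Rightarrow> 'm set) \<Rightarrow> ('m \<Rightarrow> 'm \<Rightarrow> 'm) \<Rightarrow> ('o \<Rightarrow> 'm set) \<Rightarrow> 'o \<Rightarrow> nat option" where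
  "gramsey_degree Ob hom cmp G A =
     (if \<exists>n>0. gramsey_degree_le Ob hom cmp G A n
      then Some (LEAST n. n > 0 \<and> gramsey_degree_le Ob hom cmp G A n) else None)"

end

theory Submission
  imports Defs
begin

text \<open>Suppose \<alpha> \<in> Aut(A) but \<alpha> \<notin> G_A. Each orbit f \<cdot> Aut(A) of a morphism f : A \<rightarrow> C is a
  union of G-classes; fix a representative of every orbit and colour a G-class 0 if it
  contains the representative of its own orbit, 1 otherwise. For any w : A \<rightarrow> C, with
  representative w \<gamma> of w \<cdot> Aut(A), the class of w \<gamma> has colour 0 while the class of w \<gamma> \<alpha>
  has colour 1: otherwise w \<gamma> \<alpha> \<delta> = w \<gamma> for some \<delta> \<in> G_A, and cancelling the monomorphisms
  w and \<gamma> gives \<alpha> = \<delta>\<inverse> \<in> G_A. So no copy of A in C is monochromatic, contradicting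
  t(A) = 1.\<close>

locale cat =
  fixes Ob :: "'o set" and hom :: "'o \<Rightarrow> 'o \<Rightarrow> 'm set"
    and cmp :: "'m \<Rightarrow> 'm \<Rightarrow> 'm" and ident :: "'o \<Rightarrow> 'm"
  assumes category: "category Ob hom cmp ident"
begin

lemma ident_hom: "A \<in> Ob \<Longrightarrow> ident A \<in> hom A A"
  using category unfolding category_def by blast

lemma cmp_hom:
  "\<lbrakk>A \<in> Ob; B \<in> Ob; C \<in> Ob; f \<in> hom A B; g \<in> hom B C\<rbrakk> \<Longrightarrow> cmp g f \<in> hom A C"
  using category unfolding category_def by blast

lemma cmp_assoc:
  "\<lbrakk>A \<in> Ob; B \<in> Ob; C \<in> Ob; D \<in> Ob; f \<in> hom A B; g \<in> hom B C; h \<in> hom C D\<rbrakk>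
    \<Longrightarrow> cmp h (cmp g f) = cmp (cmp h g) f"
  using category unfolding category_def by blast

lemma cmp_ident_right: "\<lbrakk>A \<in> Ob; B \<in> Ob; f \<in> hom A B\<rbrakk> \<Longrightarrow> cmp f (ident A) = f"
  using category unfolding category_def by blast

lemma cmp_ident_left: "\<lbrakk>A \<in> Ob; B \<in> Ob; f \<in> hom A B\<rbrakk> \<Longrightarrow> cmp (ident B) f = f"
  using category unfolding category_def by blast

lemma Aut_hom: "f \<in> Aut hom cmp ident A \<Longrightarrow> f \<in> hom A A"
  unfolding Aut_def by blast

lemma Aut_cmp_closed:
  assumes A: "A \<in> Ob" and a: "a \<in> Aut hom cmp ident A" and b: "b \<in> Aut hom cmp ident A"
  shows "cmp a b \<in> Aut hom cmp ident A"
proof -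
  obtain a' where a': "a' \<in> hom A A" "cmp a' a = ident A" "cmp a a' = ident A"
    using a unfolding Aut_def by blast
  obtain b' where b': "b' \<in> hom A A" "cmp b' b = ident A" "cmp b b' = ident A"
    using b unfolding Aut_def by blast
  have homs: "a \<in> hom A A" "b \<in> hom A A" using a b by (simp_all add: Aut_hom)
  have ab: "cmp a b \<in> hom A A" and ba': "cmp b' a' \<in> hom A A"
    using cmp_hom A homs a'(1) b'(1) by blast+
  have "cmp (cmp b' a') (cmp a b) = cmp b' (cmp a' (cmp a b))"
    using cmp_assoc[OF A A A A ab a'(1) b'(1)] by simp
  also have "\<dots> = cmp b' (cmp (cmp a' a) b)"
    using cmp_assoc[OF A A A A homs(2,1) a'(1)] by simp
  also have "\<dots> = ident A" using a' b' cmp_ident_left A homs by simp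
  finally have left: "cmp (cmp b' a') (cmp a b) = ident A" .
  have "cmp (cmp a b) (cmp b' a') = cmp a (cmp b (cmp b' a'))"
    using cmp_assoc[OF A A A A ba' homs(2,1)] by simp
  also have "\<dots> = cmp a (cmp (cmp b b') a')"
    using cmp_assoc[OF A A A A a'(1) b'(1) homs(2)] by simp
  also have "\<dots> = ident A" using a' b' cmp_ident_left A homs by simp
  finally have right: "cmp (cmp a b) (cmp b' a') = ident A" .
  show ?thesis unfolding Aut_def using ab ba' left right by blast
qed

lemma subgroup_Aut_Aut:
  assumes A: "A \<in> Ob"
  shows "subgroup_Aut hom cmp ident A (Aut hom cmp ident A)"
proof -
  have inverse: "\<exists>b\<in>Aut hom cmp ident A. cmp b a = ident A \<and> cmp a b = ident A"
    if "a \<in> Aut hom cmp ident A" for a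
    using that unfolding Aut_def by blast
  have "ident A \<in> Aut hom cmp ident A"
    unfolding Aut_def using ident_hom A cmp_ident_left by blast
  then show ?thesis unfolding subgroup_Aut_def using inverse Aut_cmp_closed[OF A] by blast
qed

lemma subgroup_Aut_hom: "\<lbrakk>subgroup_Aut hom cmp ident A H; f \<in> H\<rbrakk> \<Longrightarrow> f \<in> hom A A"
  unfolding subgroup_Aut_def Aut_def by blast

lemma subgroup_Aut_ident: "subgroup_Aut hom cmp ident A H \<Longrightarrow> ident A \<in> H"
  unfolding subgroup_Aut_def by blast

lemma subgroup_right_inverse_mem:
  assumes A: "A \<in> Ob" and H: "subgroup_Aut hom cmp ident A H"
    and \<delta>: "\<delta> \<in> H" and \<alpha>: "\<alpha> \<in> hom A A" and inv: "cmp \<alpha> \<delta> = ident A"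
  shows "\<alpha> \<in> H"
proof -
  obtain \<delta>' where \<delta>': "\<delta>' \<in> H" "cmp \<delta> \<delta>' = ident A"
    using H \<delta> unfolding subgroup_Aut_def by blast
  note homs = subgroup_Aut_hom[OF H \<delta>] subgroup_Aut_hom[OF H \<delta>'(1)]
  have "\<alpha> = cmp \<alpha> (cmp \<delta> \<delta>')" using \<delta>'(2) cmp_ident_right[OF A A \<alpha>] by simp
  also have "\<dots> = cmp (cmp \<alpha> \<delta>) \<delta>'" using cmp_assoc[OF A A A A homs(2,1) \<alpha>] .
  also have "\<dots> = \<delta>'" using inv cmp_ident_left[OF A A homs(2)] by simp
  finally show ?thesis using \<delta>'(1) by simp
qed

lemma mem_gclass_self:
  assumes "A \<in> Ob" "C \<in> Ob" "ident A \<in> G A" "f \<in> hom A C"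
  shows "f \<in> gclass cmp G A f"
proof -
  have "cmp f (ident A) \<in> gclass cmp G A f" unfolding gclass_def using assms(3) by blast
  then show ?thesis using cmp_ident_right assms by simp
qed

lemma gclass_cmp_eq:
  assumes A: "A \<in> Ob" and C: "C \<in> Ob" and G: "subgroup_Aut hom cmp ident A (G A)"
    and w: "w \<in> hom A C" and \<gamma>: "\<gamma> \<in> G A"
  shows "gclass cmp G A (cmp w \<gamma>) = gclass cmp G A w"
proof -
  note G_hom = subgroup_Aut_hom[OF G]
  have closed: "\<And>a b. a \<in> G A \<Longrightarrow> b \<in> G A \<Longrightarrow> cmp a b \<in> G A"
    using G unfolding subgroup_Aut_def by blast
  obtain \<gamma>' where \<gamma>': "\<gamma>' \<in> G A" "cmp \<gamma> \<gamma>' = ident A"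
    using G \<gamma> unfolding subgroup_Aut_def by blast
  have assoc: "cmp (cmp w \<gamma>) \<beta> = cmp w (cmp \<gamma> \<beta>)" if "\<beta> \<in> G A" for \<beta>
    using cmp_assoc[OF A A A C G_hom[OF that] G_hom[OF \<gamma>] w] by simp
  show ?thesis
  proof (intro equalityI subsetI)
    fix x assume "x \<in> gclass cmp G A (cmp w \<gamma>)"
    then obtain \<beta> where "\<beta> \<in> G A" "x = cmp w (cmp \<gamma> \<beta>)"
      unfolding gclass_def using assoc by auto
    then show "x \<in> gclass cmp G A w" unfolding gclass_def using closed \<gamma> by blast
  next
    fix x assume "x \<in> gclass cmp G A w"
    then obtain \<beta> where \<beta>: "\<beta> \<in> G A" "x = cmp w \<beta>" unfolding gclass_def by blast
    have "x = cmp w (cmp (cmp \<gamma> \<gamma>') \<beta>)"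
      using \<beta> \<gamma>'(2) cmp_ident_left[OF A A G_hom[OF \<beta>(1)]] by simp
    also have "\<dots> = cmp w (cmp \<gamma> (cmp \<gamma>' \<beta>))"
      using cmp_assoc[OF A A A A G_hom[OF \<beta>(1)] G_hom[OF \<gamma>'(1)] G_hom[OF \<gamma>]] by simp
    also have "\<dots> = cmp (cmp w \<gamma>) (cmp \<gamma>' \<beta>)"
      using assoc[OF closed[OF \<gamma>'(1) \<beta>(1)]] by simp
    finally show "x \<in> gclass cmp G A (cmp w \<gamma>)"
      unfolding gclass_def using closed[OF \<gamma>'(1) \<beta>(1)] by blast
  qed
qed

lemma gclass_cmp_mem_gact:
  "f \<in> hom A B \<Longrightarrow> gclass cmp G A (cmp w f) \<in> gact hom cmp G A B w (gbinom hom cmp G B A)"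
  unfolding gact_def gbinom_def by blast

definition aut_rep :: "'o \<Rightarrow> 'm \<Rightarrow> 'm" where
  "aut_rep A f = (SOME h. h \<in> gclass cmp (Aut hom cmp ident) A f)"

definition rep_colouring :: "'o \<Rightarrow> 'm set \<Rightarrow> nat" where
  "rep_colouring A X = (if \<exists>f\<in>X. f = aut_rep A f then 0 else 1)"

lemma aut_rep_mem:
  assumes "A \<in> Ob" "C \<in> Ob" "w \<in> hom A C"
  shows "\<exists>\<gamma>\<in>Aut hom cmp ident A. aut_rep A w = cmp w \<gamma>"
proof -
  have "w \<in> gclass cmp (Aut hom cmp ident) A w"
    using mem_gclass_self[where G = "Aut hom cmp ident", OF assms(1,2) _ assms(3)]
      subgroup_Aut_ident[OF subgroup_Aut_Aut[OF assms(1)]] by blast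
  then have "aut_rep A w \<in> gclass cmp (Aut hom cmp ident) A w"
    unfolding aut_rep_def by (rule someI)
  then show ?thesis unfolding gclass_def by blast
qed

lemma aut_rep_cmp:
  assumes A: "A \<in> Ob" and C: "C \<in> Ob" and w: "w \<in> hom A C"
    and \<gamma>: "\<gamma> \<in> Aut hom cmp ident A"
  shows "aut_rep A (cmp w \<gamma>) = aut_rep A w"
  unfolding aut_rep_def
  using gclass_cmp_eq[where G = "Aut hom cmp ident", OF A C subgroup_Aut_Aut[OF A] w \<gamma>] by simp

lemma rep_colouring_rep_class:
  assumes A: "A \<in> Ob" and C: "C \<in> Ob" and G: "ident A \<in> G A" and w: "w \<in> hom A C"
  shows "rep_colouring A (gclass cmp G A (aut_rep A w)) = 0"
proof -
  obtain \<gamma> where \<gamma>: "\<gamma> \<in> Aut hom cmp ident A" "aut_rep A w = cmp w \<gamma>"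
    using aut_rep_mem A C w by blast
  have "cmp w \<gamma> \<in> hom A C" using cmp_hom A C w \<gamma>(1) Aut_hom by blast
  then have mem: "aut_rep A w \<in> gclass cmp G A (aut_rep A w)"
    using mem_gclass_self A C G \<gamma>(2) by simp
  have "aut_rep A (aut_rep A w) = aut_rep A w"
    using aut_rep_cmp A C w \<gamma> by simp
  then have "\<exists>f\<in>gclass cmp G A (aut_rep A w). f = aut_rep A f"
    using bexI[OF _ mem] by simp
  then show ?thesis unfolding rep_colouring_def by simp
qed

end

locale mono_cat = cat +
  assumes all_mono: "all_mono Ob hom cmp"
begin

lemma cmp_cancel_left:
  "\<lbrakk>A \<in> Ob; B \<in> Ob; C \<in> Ob; f \<in> hom B C; g \<in> hom A B; h \<in> hom A B; cmp f g = cmp f h\<rbrakk>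
    \<Longrightarrow> g = h"
  using all_mono unfolding all_mono_def by blast

lemma rep_colouring_shifted_rep_class:
  assumes A: "A \<in> Ob" and C: "C \<in> Ob" and G: "subgroup_Aut hom cmp ident A (G A)"
    and w: "w \<in> hom A C" and \<alpha>: "\<alpha> \<in> Aut hom cmp ident A"
    and colour: "rep_colouring A (gclass cmp G A (cmp (aut_rep A w) \<alpha>)) = 0"
  shows "\<alpha> \<in> G A"
proof -
  obtain \<gamma> where \<gamma>: "\<gamma> \<in> Aut hom cmp ident A" "aut_rep A w = cmp w \<gamma>"
    using aut_rep_mem A C w by blast
  obtain x where x: "x \<in> gclass cmp G A (cmp (aut_rep A w) \<alpha>)" "x = aut_rep A x"
    using colour unfolding rep_colouring_def by (auto split: if_splits)
  then obtain \<delta> where \<delta>: "\<delta> \<in> G A" "x = cmp (cmp (cmp w \<gamma>) \<alpha>) \<delta>"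
    using \<gamma>(2) unfolding gclass_def by auto
  have homs: "\<gamma> \<in> hom A A" "\<alpha> \<in> hom A A" "\<delta> \<in> hom A A"
    using Aut_hom[OF \<gamma>(1)] Aut_hom[OF \<alpha>] subgroup_Aut_hom[OF G \<delta>(1)] .
  have wg: "cmp w \<gamma> \<in> hom A C" and ad: "cmp \<alpha> \<delta> \<in> hom A A"
    using cmp_hom[OF A A C homs(1) w] cmp_hom[OF A A A homs(3,2)] .
  have "x = cmp (cmp w \<gamma>) (cmp \<alpha> \<delta>)"
    using \<delta>(2) cmp_assoc[OF A A A C homs(3,2) wg] by simp
  also have "\<dots> = cmp w (cmp \<gamma> (cmp \<alpha> \<delta>))"
    using cmp_assoc[OF A A A C ad homs(1) w] by simp
  finally have x_eq: "x = cmp w (cmp \<gamma> (cmp \<alpha> \<delta>))" .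
  have "\<delta> \<in> Aut hom cmp ident A" using G \<delta>(1) unfolding subgroup_Aut_def by blast
  then have "cmp \<gamma> (cmp \<alpha> \<delta>) \<in> Aut hom cmp ident A"
    using Aut_cmp_closed[OF A \<gamma>(1) Aut_cmp_closed[OF A \<alpha>]] by blast
  then have "cmp w (cmp \<gamma> (cmp \<alpha> \<delta>)) = cmp w \<gamma>"
    using x(2) x_eq aut_rep_cmp[OF A C w] \<gamma>(2) by simp
  then have "cmp \<gamma> (cmp \<alpha> \<delta>) = \<gamma>"
    by (rule cmp_cancel_left[OF A A C w cmp_hom[OF A A A ad homs(1)] homs(1)])
  then have "cmp \<gamma> (cmp \<alpha> \<delta>) = cmp \<gamma> (ident A)"
    using cmp_ident_right[OF A A homs(1)] by simp
  then have "cmp \<alpha> \<delta> = ident A"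
    using cmp_cancel_left[OF A A A homs(1) ad] ident_hom[OF A] by blast
  then show ?thesis using subgroup_right_inverse_mem A G \<delta>(1) homs(2) by blast
qed

lemma Aut_subset_if_gramsey_arrow:
  assumes A: "A \<in> Ob" and C: "C \<in> Ob" and G: "subgroup_Aut hom cmp ident A (G A)"
    and arrow: "gramsey_arrow hom cmp G C A A 2 1"
  shows "Aut hom cmp ident A \<subseteq> G A"
proof
  fix \<alpha> assume \<alpha>: "\<alpha> \<in> Aut hom cmp ident A"
  have "rep_colouring A ` gbinom hom cmp G C A \<subseteq> {..<2}"
    by (auto simp: rep_colouring_def)
  then obtain w where w: "w \<in> hom A C"
    and monochromatic: "card (rep_colouring A ` gact hom cmp G A A w (gbinom hom cmp G A A)) \<le> 1"
    using arrow unfolding gramsey_arrow_def by blast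
  let ?copy = "gact hom cmp G A A w (gbinom hom cmp G A A)"
  obtain \<gamma> where \<gamma>: "\<gamma> \<in> Aut hom cmp ident A" "aut_rep A w = cmp w \<gamma>"
    using aut_rep_mem A C w by blast
  have homs: "\<gamma> \<in> hom A A" "cmp \<gamma> \<alpha> \<in> hom A A"
    using \<gamma>(1) Aut_cmp_closed[OF A \<gamma>(1) \<alpha>] by (simp_all add: Aut_hom)
  have "cmp (aut_rep A w) \<alpha> = cmp w (cmp \<gamma> \<alpha>)"
    using \<gamma>(2) cmp_assoc[OF A A A C Aut_hom[OF \<alpha>] homs(1) w] by simp
  then have in_copy: "gclass cmp G A (aut_rep A w) \<in> ?copy"
    "gclass cmp G A (cmp (aut_rep A w) \<alpha>) \<in> ?copy"
    using \<gamma>(2) gclass_cmp_mem_gact[OF homs(1)] gclass_cmp_mem_gact[OF homs(2)] by simp_all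
  have "rep_colouring A ` ?copy \<subseteq> {0, 1}"
    unfolding rep_colouring_def by auto
  then have "finite (rep_colouring A ` ?copy)"
    by (rule finite_subset) simp
  then have "rep_colouring A (gclass cmp G A (cmp (aut_rep A w) \<alpha>))
      = rep_colouring A (gclass cmp G A (aut_rep A w))"
    by (rule card_le_Suc0_iff_eq[THEN iffD1, rule_format,
          OF _ monochromatic[unfolded One_nat_def] imageI[OF in_copy(2)] imageI[OF in_copy(1)]])
  also have "\<dots> = 0"
    using rep_colouring_rep_class[where G = G, OF A C subgroup_Aut_ident[OF G] w] .
  finally show "\<alpha> \<in> G A" using rep_colouring_shifted_rep_class A C G w \<alpha> by blast
qed

end

lemma gramsey_degree_Some_imp_le:
  assumes "gramsey_degree Ob hom cmp G A = Some n"
  shows "gramsey_degree_le Ob hom cmp G A n"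
proof -
  have "\<exists>n>0. gramsey_degree_le Ob hom cmp G A n"
    and "(LEAST n. n > 0 \<and> gramsey_degree_le Ob hom cmp G A n) = n"
    using assms unfolding gramsey_degree_def by (auto split: if_splits)
  then show ?thesis by (metis (mono_tags, lifting) LeastI_ex)
qed

theorem proposition3p2:
  fixes Ob :: "'o set" and hom :: "'o \<Rightarrow> 'o \<Rightarrow> 'm set"
    and cmp :: "'m \<Rightarrow> 'm \<Rightarrow> 'm" and ident :: "'o \<Rightarrow> 'm"
    and G :: "'o \<Rightarrow> 'm set"
  assumes "category Ob hom cmp ident"
    and "all_mono Ob hom cmp"
    and "\<forall>A\<in>Ob. subgroup_Aut hom cmp ident A (G A)"
    and "\<forall>A\<in>Ob. gramsey_degree Ob hom cmp G A = Some 1"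
  shows "\<forall>A\<in>Ob. Aut hom cmp ident A = G A"
proof
  interpret mono_cat Ob hom cmp ident
    using assms(1,2) by (simp add: mono_cat_def mono_cat_axioms_def cat_def)
  fix A assume A: "A \<in> Ob"
  have G: "subgroup_Aut hom cmp ident A (G A)" using assms(3) A by blast
  have "gramsey_degree_le Ob hom cmp G A 1"
    using assms(4) A by (intro gramsey_degree_Some_imp_le) blast
  then obtain C where "C \<in> Ob" "gramsey_arrow hom cmp G C A A 2 1"
    using A ident_hom unfolding gramsey_degree_le_def by blast
  then have "Aut hom cmp ident A \<subseteq> G A" using Aut_subset_if_gramsey_arrow A G by blast
  moreover have "G A \<subseteq> Aut hom cmp ident A" using G unfolding subgroup_Aut_def by blast
  ultimately show "Aut hom cmp ident A = G A" by blast
qed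

end
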